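(* Let $G$ be an undirected, connected graph on $N\ge2$ vertices with Laplacian $L$ and degree matrix $D=\operatorname{diag}(|\mathcal N_1|,\dots,|\mathcal N_N|)$. Fix weights $w_1,w_2,w_3>0$. For $h>0$ define \[ a^h=\frac{w_1h^2}{2\left(w_3+w_2h^2+w_1\frac{h^4}{4}\right)},\qquad b^h=\frac{w_2h+w_1\frac{h^3}{2}}{w_3+w_2h^2+w_1\frac{h^4}{4}}, \] and for an eigenvalue $\lambda_i$ of $D^{-1}L$ define \[ Q_i^h=\begin{bmatrix}1-\frac{h^2}{2}a^h\lambda_i & h-\frac{h^2}{2}b^h\\ -ha^h\lambda_i & 1-hb^h\end{bmatrix}. \] Then for every eigenvalue $\lambda_i>0$ of $D^{-1}L$ there exists $h_i>0$ such that $\rho(Q_i^h)<1$ for all $h\in(0,h_i)$, where $\rho$ denotes the spectral radius.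
   Context: $\mathcal N_i$ is the set of neighbors of vertex $i$ and $|\mathcal N_i|$ its degree. Since the graph is connected, $D$ is invertible. The eigenvalues of $D^{-1}L$ are real and satisfy $0=\lambda_1<\lambda_2\le\dots\le\lambda_N\le2$. *)

theory Defs
  imports "Jordan_Normal_Form.Spectral_Radius"
begin

definition undirected_graph :: "nat \<Rightarrow> (nat \<Rightarrow> nat \<Rightarrow> bool) \<Rightarrow> bool" where
  "undirected_graph N E \<longleftrightarrow>
     (\<forall>i j. E i j \<longrightarrow> i < N \<and> j < N) \<and>
     (\<forall>i j. E i j \<longrightarrow> E j i) \<and>
     (\<forall>i. \<not> E i i)"

definition connected_graph :: "nat \<Rightarrow> (nat \<Rightarrow> nat \<Rightarrow> bool) \<Rightarrow> bool" where
  "connected_graph N E \<longleftrightarrow> (\<forall>i<N. \<forall>j<N. E\<^sup>*\<^sup>* i j)"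

definition nbrs :: "nat \<Rightarrow> (nat \<Rightarrow> nat \<Rightarrow> bool) \<Rightarrow> nat \<Rightarrow> nat set" where
  "nbrs N E i = {j. j < N \<and> E i j}"

definition degree_mat :: "nat \<Rightarrow> (nat \<Rightarrow> nat \<Rightarrow> bool) \<Rightarrow> real mat" where
  "degree_mat N E = mat N N (\<lambda>(i,j). if i = j then real (card (nbrs N E i)) else 0)"

definition adjacency_mat :: "nat \<Rightarrow> (nat \<Rightarrow> nat \<Rightarrow> bool) \<Rightarrow> real mat" where
  "adjacency_mat N E = mat N N (\<lambda>(i,j). if E i j then 1 else 0)"

definition laplacian_mat :: "nat \<Rightarrow> (nat \<Rightarrow> nat \<Rightarrow> bool) \<Rightarrow> real mat" where
  "laplacian_mat N E = degree_mat N E - adjacency_mat N E"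

definition inv_degree_mat :: "nat \<Rightarrow> (nat \<Rightarrow> nat \<Rightarrow> bool) \<Rightarrow> real mat" where
  "inv_degree_mat N E = mat N N (\<lambda>(i,j). if i = j then 1 / real (card (nbrs N E i)) else 0)"

definition a_h :: "real \<Rightarrow> real \<Rightarrow> real \<Rightarrow> real \<Rightarrow> real" where
  "a_h w1 w2 w3 h = w1 * h^2 / (2 * (w3 + w2 * h^2 + w1 * h^4 / 4))"

definition b_h :: "real \<Rightarrow> real \<Rightarrow> real \<Rightarrow> real \<Rightarrow> real" where
  "b_h w1 w2 w3 h = (w2 * h + w1 * h^3 / 2) / (w3 + w2 * h^2 + w1 * h^4 / 4)"

definition Q_h :: "real \<Rightarrow> real \<Rightarrow> real \<Rightarrow> real \<Rightarrow> real \<Rightarrow> real mat" where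
  "Q_h w1 w2 w3 lam h = mat_of_rows_list 2
     [[1 - h^2 / 2 * a_h w1 w2 w3 h * lam, h - h^2 / 2 * b_h w1 w2 w3 h],
      [- h * a_h w1 w2 w3 h * lam,          1 - h * b_h w1 w2 w3 h]]"

end

theory Submission
  imports Defs
begin

(* The eigenvalues of a real 2x2 matrix with trace T and determinant D are the roots of
   z^2 - T z + D, and both lie in the open unit disc when |D| < 1 and |T| < 1 + D (Jury's
   stability criterion). For Q_h, writing \<alpha> = h^2 a_h \<lambda> / 2 and \<beta> = h b_h, one has
   T = 2 - \<alpha> - \<beta> and D = 1 - \<beta> + \<alpha>, so the criterion reads 0 < \<alpha> < \<beta> < 2. Here \<beta> < 2
   for every h > 0, and \<alpha> < \<beta> as soon as w1 \<lambda> h^2 < 4 w2. *)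

lemma det_mat2:
  fixes A :: "'a::comm_ring_1 mat"
  assumes "A \<in> carrier_mat 2 2"
  shows "det A = A $$ (0,0) * A $$ (1,1) - A $$ (0,1) * A $$ (1,0)"
  using assms
  apply (subst laplace_expansion_column[OF assms, of 0])
  apply (auto simp: cofactor_def mat_delete_def det_def' numeral_2_eq_2 lessThan_Suc)
  apply (subst (1 2) det_single)
  apply auto
  done

lemma eigenvalue_mat2_quadratic:
  fixes A :: "'a::field mat"
  assumes A: "A \<in> carrier_mat 2 2" and "eigenvalue A z"
  shows "z^2 - (A $$ (0,0) + A $$ (1,1)) * z + det A = 0"
proof -
  have "det (char_matrix A z) = (A $$ (0,0) - z) * (A $$ (1,1) - z) - A $$ (0,1) * A $$ (1,0)"
    using A by (subst det_mat2) (auto simp: char_matrix_def)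
  also have "\<dots> = z^2 - (A $$ (0,0) + A $$ (1,1)) * z + det A"
    unfolding det_mat2[OF A] by (simp add: algebra_simps power2_eq_square)
  finally show ?thesis
    using eigenvalue_det[OF A] assms(2) by simp
qed

lemma real_quadratic_root_abs_lt_1:
  fixes x T D :: real
  assumes "x^2 - T * x + D = 0" and "\<bar>D\<bar> < 1" "\<bar>T\<bar> < 1 + D"
  shows "\<bar>x\<bar> < 1"
proof (rule ccontr)
  assume "\<not> \<bar>x\<bar> < 1"
  then consider "x \<ge> 1" | "x \<le> -1" by linarith
  then show False
  proof cases
    case 1
    have "x^2 - T * x + D = (x - 1) * (x + 1 - T) + (1 - T + D)"
      by (simp add: algebra_simps power2_eq_square)
    moreover have "(x - 1) * (x + 1 - T) \<ge> 0"
      using 1 assms by (intro mult_nonneg_nonneg) auto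
    ultimately show False using assms by linarith
  next
    case 2
    have "x^2 - T * x + D = (x + 1) * (x - 1 - T) + (1 + T + D)"
      by (simp add: algebra_simps power2_eq_square)
    moreover have "(x + 1) * (x - 1 - T) \<ge> 0"
      using 2 assms by (intro mult_nonpos_nonpos) auto
    ultimately show False using assms by linarith
  qed
qed

lemma quadratic_root_norm_lt_1:
  fixes z :: complex and T D :: real
  assumes root: "z^2 - of_real T * z + of_real D = 0" and "\<bar>D\<bar> < 1" "\<bar>T\<bar> < 1 + D"
  shows "cmod z < 1"
proof -
  obtain x y where z: "z = Complex x y" by (cases z)
  from root have re: "x^2 - y^2 - T * x + D = 0" and im: "(2 * x - T) * y = 0"
    by (simp_all add: z complex_eq_iff power2_eq_square algebra_simps)
  show ?thesis
  proof (cases "y = 0")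
    case True
    with re real_quadratic_root_abs_lt_1 assms(2,3) show ?thesis
      by (simp add: z cmod_def)
  next
    case False
    \<comment> \<open>a non-real root has its conjugate as second root, so its squared modulus is the product D\<close>
    with im have "T = 2 * x" by simp
    with re have "(cmod z)^2 = D" by (simp add: z cmod_def power2_eq_square algebra_simps)
    then have "(cmod z)^2 < 1^2" using assms(2) by simp
    then show ?thesis by (rule power_less_imp_less_base) simp
  qed
qed

lemma spectral_radius_of_real_mat2_lt_1:
  fixes A :: "real mat"
  assumes A: "A \<in> carrier_mat 2 2"
    and "\<bar>det A\<bar> < 1" and "\<bar>A $$ (0,0) + A $$ (1,1)\<bar> < 1 + det A"
  shows "spectral_radius (map_mat complex_of_real A) < 1"
proof -
  let ?M = "map_mat complex_of_real A"
  have M: "?M \<in> carrier_mat 2 2" using A by simp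
  obtain z where sr: "spectral_radius ?M = cmod z" and "z \<in> spectrum ?M"
    using spectral_radius_mem_max(1)[OF M] by auto
  then have "eigenvalue ?M z" by (simp add: spectrum_def)
  from eigenvalue_mat2_quadratic[OF M this]
  have "z^2 - of_real (A $$ (0,0) + A $$ (1,1)) * z + of_real (det A) = 0"
    using A by simp
  from quadratic_root_norm_lt_1[OF this assms(2,3)] show ?thesis
    using sr by simp
qed

lemma mat2_of_rows_list:
  fixes p q r s :: "'a::zero"
  defines "A \<equiv> mat_of_rows_list 2 [[p, q], [r, s]]"
  shows "A \<in> carrier_mat 2 2"
    and "A $$ (0,0) = p" "A $$ (0,1) = q" "A $$ (1,0) = r" "A $$ (1,1) = s"
  unfolding A_def mat_of_rows_list_def carrier_mat_def by auto

lemma Q_h_carrier: "Q_h w1 w2 w3 lam h \<in> carrier_mat 2 2"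
  unfolding Q_h_def by (rule mat2_of_rows_list)

lemma Q_h_trace:
  "Q_h w1 w2 w3 lam h $$ (0,0) + Q_h w1 w2 w3 lam h $$ (1,1)
     = 2 - h^2 * a_h w1 w2 w3 h * lam / 2 - h * b_h w1 w2 w3 h"
  unfolding Q_h_def mat2_of_rows_list by simp

lemma Q_h_det:
  "det (Q_h w1 w2 w3 lam h) = 1 - h * b_h w1 w2 w3 h + h^2 * a_h w1 w2 w3 h * lam / 2"
  unfolding det_mat2[OF Q_h_carrier] unfolding Q_h_def mat2_of_rows_list
  by (simp add: field_simps power2_eq_square)

lemma spectral_radius_Q_h_lt_1:
  assumes "w1 > 0" "w2 > 0" "w3 > 0" "lam > 0" "h > 0" and small: "w1 * lam * h^2 < 4 * w2"
  shows "spectral_radius (map_mat complex_of_real (Q_h w1 w2 w3 lam h)) < 1"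
proof -
  define S where "S = w3 + w2 * h^2 + w1 * h^4 / 4"
  define \<alpha> where "\<alpha> = h^2 * a_h w1 w2 w3 h * lam / 2"
  define \<beta> where "\<beta> = h * b_h w1 w2 w3 h"
  have S: "S > 0" unfolding S_def using assms by (simp add: add_pos_nonneg)
  have \<alpha>: "\<alpha> = w1 * lam * h^4 / (4 * S)"
    unfolding \<alpha>_def a_h_def S_def by (simp add: field_simps power2_eq_square power4_eq_xxxx)
  have \<beta>: "\<beta> = (w2 * h^2 + w1 * h^4 / 2) / S"
    unfolding \<beta>_def b_h_def S_def by (simp add: field_simps power2_eq_square power3_eq_cube power4_eq_xxxx)
  have "0 < \<alpha>" unfolding \<alpha> using S assms by simp
  moreover have "\<beta> < 2" unfolding \<beta> using S assms by (simp add: divide_less_eq S_def add_pos_pos)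
  moreover have "\<alpha> < \<beta>"
  proof -
    have "w1 * lam * h^2 * h^2 < 4 * w2 * h^2" using small assms by simp
    then have "w1 * lam * h^4 < 4 * w2 * h^2" by (simp add: power4_eq_xxxx power2_eq_square)
    moreover have "0 \<le> w1 * h^4" using assms by simp
    ultimately have "w1 * lam * h^4 < 4 * (w2 * h^2 + w1 * h^4 / 2)" by (simp add: algebra_simps)
    then show ?thesis unfolding \<alpha> \<beta> using S by (simp add: field_simps)
  qed
  moreover have "Q_h w1 w2 w3 lam h $$ (0,0) + Q_h w1 w2 w3 lam h $$ (1,1) = 2 - \<alpha> - \<beta>"
    unfolding Q_h_trace \<alpha>_def \<beta>_def ..
  moreover have "det (Q_h w1 w2 w3 lam h) = 1 - \<beta> + \<alpha>"
    unfolding Q_h_det \<alpha>_def \<beta>_def ..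
  ultimately show ?thesis
    by (intro spectral_radius_of_real_mat2_lt_1[OF Q_h_carrier]) auto
qed

theorem lemma1:
  fixes N :: nat and E :: "nat \<Rightarrow> nat \<Rightarrow> bool" and w1 w2 w3 lam :: real
  assumes "N \<ge> 2"
    and "undirected_graph N E"
    and "connected_graph N E"
    and "w1 > 0" and "w2 > 0" and "w3 > 0"
    and "eigenvalue (inv_degree_mat N E * laplacian_mat N E) lam"
    and "lam > 0"
  shows "\<exists>hi > 0. \<forall>h. 0 < h \<and> h < hi \<longrightarrow>
           spectral_radius (map_mat complex_of_real (Q_h w1 w2 w3 lam h)) < 1"
proof (intro exI[of _ "2 * sqrt (w2 / (w1 * lam))"] conjI allI impI)
  show "2 * sqrt (w2 / (w1 * lam)) > 0" using assms by simp
  fix h assume h: "0 < h \<and> h < 2 * sqrt (w2 / (w1 * lam))"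
  then have "h^2 < (2 * sqrt (w2 / (w1 * lam)))^2"
    by (intro power_strict_mono) auto
  also have "\<dots> = 4 * w2 / (w1 * lam)"
    using assms by (simp add: power_mult_distrib)
  finally have "w1 * lam * h^2 < 4 * w2"
    using assms by (simp add: field_simps)
  then show "spectral_radius (map_mat complex_of_real (Q_h w1 w2 w3 lam h)) < 1"
    using spectral_radius_Q_h_lt_1 assms h by blast
qed

end
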